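(* Let $V$ be a finite set, let $d\ge 1$, let $R=(\le_1,\ldots,\le_d)$ be a $d$-representation on $V$, and let $R'=(\le_1,\ldots,\le_{d-1})$. Then the Hasse diagram of the inclusion poset of $\Sigma(R)\setminus\Sigma(R')$ admits a complete acyclic matching.
   Context: A $k$-representation on $V$ is a family of $k$ linear orders on $V$. For a linear order $\le$ on $V$, $x\in V$ and $F\subseteq V$, $x$ dominates $F$ in $\le$ if $f\le x$ for all $f\in F$; $x$ dominates $F$ in a representation if it dominates $F$ in at least one of its orders. For a representation $S$ on $V$, the supremum section $\Sigma(S)$ is the set of subsets $F\subseteq V$ such that every $v\in V$ dominates $F$ in $S$. When $d=1$, $R'$ has no orders and the same definition applies. The Hasse diagram of a finite poset $(P,\le)$ is the digraph with an arc $(u,w)$ whenever $w<u$ and there is no $z$ with $w<z<u$ (the transitive reduction). A matching $M$ of the Hasse diagram is a set of arcs no two sharing an endpoint; it is complete (perfect) if every element of $P$ is an endpoint of an arc of $M$; it is acyclic if the digraph obtained from the Hasse diagram by reversing the orientation of the arcs in $M$ has no directed cycle. *)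

theory Defs
  imports Main
begin

text \<open>A k-representation on V: a list of k linear orders on V (as relations, (x,y) means x \<le> y).\<close>
definition representation :: "'a set \<Rightarrow> 'a rel list \<Rightarrow> bool" where
  "representation V S \<longleftrightarrow> (\<forall>r \<in> set S. linear_order_on V r)"

definition dominates_in_order :: "'a rel \<Rightarrow> 'a \<Rightarrow> 'a set \<Rightarrow> bool" where
  "dominates_in_order r x F \<longleftrightarrow> (\<forall>f \<in> F. (f, x) \<in> r)"

definition dominates_in_rep :: "'a rel list \<Rightarrow> 'a \<Rightarrow> 'a set \<Rightarrow> bool" where
  "dominates_in_rep S x F \<longleftrightarrow> (\<exists>r \<in> set S. dominates_in_order r x F)"

definition supremum_section :: "'a set \<Rightarrow> 'a rel list \<Rightarrow> 'a set set" where
  "supremum_section V S = {F. F \<subseteq> V \<and> (\<forall>v \<in> V. dominates_in_rep S v F)}"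

definition hasse_diagram :: "'b set \<Rightarrow> ('b \<Rightarrow> 'b \<Rightarrow> bool) \<Rightarrow> ('b \<times> 'b) set" where
  "hasse_diagram P lt = {(u, w). u \<in> P \<and> w \<in> P \<and> lt w u \<and> \<not> (\<exists>z \<in> P. lt w z \<and> lt z u)}"

definition is_matching :: "('b \<times> 'b) set \<Rightarrow> ('b \<times> 'b) set \<Rightarrow> bool" where
  "is_matching H M \<longleftrightarrow> M \<subseteq> H \<and>
     (\<forall>e \<in> M. \<forall>e' \<in> M. e \<noteq> e' \<longrightarrow> {fst e, snd e} \<inter> {fst e', snd e'} = {})"

definition complete_matching :: "'b set \<Rightarrow> ('b \<times> 'b) set \<Rightarrow> bool" where
  "complete_matching P M \<longleftrightarrow> (\<forall>x \<in> P. \<exists>e \<in> M. x = fst e \<or> x = snd e)"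

definition acyclic_matching :: "('b \<times> 'b) set \<Rightarrow> ('b \<times> 'b) set \<Rightarrow> bool" where
  "acyclic_matching H M \<longleftrightarrow> acyclic ((H - M) \<union> M\<inverse>)"

end

theory Submission
  imports Defs
begin

text \<open>Write \<open>R = Q @ [r]\<close>. A set \<open>F\<close> lies in \<open>\<Sigma>(R) - \<Sigma>(Q)\<close> iff its set \<open>N(F)\<close> of
  non-dominators with respect to \<open>Q\<close> is nonempty and every element of \<open>N(F)\<close> dominates \<open>F\<close>
  in \<open>r\<close>. Let the pivot \<open>p(F)\<close> be the \<open>r\<close>-least element of \<open>N(F)\<close>. Adding or removing
  \<open>p(F)\<close> stays inside \<open>\<Sigma>(R) - \<Sigma>(Q)\<close> and does not change the pivot, so pairing \<open>F\<close>
  with \<open>F \<union> {p(F)}\<close> or \<open>F - {p(F)}\<close> is a complete matching of the Hasse diagram.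
  Since \<open>N\<close> is monotone, the pivot can only move up in \<open>r\<close> when passing to a subset.
  Hence along each arc of the diagram with the matched arcs reversed, either the pivot moves
  strictly up, or it stays and \<open>F - {p(F)}\<close> shrinks strictly, or both stay and \<open>p(F)\<close> is
  added to \<open>F\<close>; a cycle is therefore impossible.\<close>

definition toggle_matching :: "('a set \<Rightarrow> 'a) \<Rightarrow> 'a set set \<Rightarrow> ('a set \<times> 'a set) set" where
  "toggle_matching u P = {(A, A - {u A}) | A. A \<in> P \<and> u A \<in> A}"

lemma toggle_matching_subset_hasse_diagram:
  assumes "\<And>F. F \<in> P \<Longrightarrow> u F \<in> F \<Longrightarrow> F - {u F} \<in> P"
  shows "toggle_matching u P \<subseteq> hasse_diagram P (\<subset>)"
  using assms unfolding toggle_matching_def hasse_diagram_def by blast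

lemma toggle_matching_edge_at:
  assumes remove: "\<And>F. F \<in> P \<Longrightarrow> u F \<in> F \<Longrightarrow> u (F - {u F}) = u F"
    and "e \<in> toggle_matching u P" and "S = fst e \<or> S = snd e"
  shows "e = (if u S \<in> S then (S, S - {u S}) else (insert (u S) S, S))"
proof -
  obtain A where e: "e = (A, A - {u A})" "A \<in> P" "u A \<in> A"
    using assms(2) unfolding toggle_matching_def by blast
  have "u (A - {u A}) = u A" using e(2,3) by (rule remove)
  then show ?thesis using assms(3) e by (auto simp: insert_absorb)
qed

lemma toggle_matching_is_matching:
  assumes "\<And>F. F \<in> P \<Longrightarrow> u F \<in> F \<Longrightarrow> F - {u F} \<in> P \<and> u (F - {u F}) = u F"
  shows "is_matching (hasse_diagram P (\<subset>)) (toggle_matching u P)"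
  unfolding is_matching_def
proof (intro conjI toggle_matching_subset_hasse_diagram ballI impI)
  have remove: "u (F - {u F}) = u F" if "F \<in> P" "u F \<in> F" for F
    using assms that by blast
  fix e e' assume e: "e \<in> toggle_matching u P" "e' \<in> toggle_matching u P" "e \<noteq> e'"
  show "{fst e, snd e} \<inter> {fst e', snd e'} = {}"
  proof (rule ccontr)
    assume "{fst e, snd e} \<inter> {fst e', snd e'} \<noteq> {}"
    then obtain S where "S = fst e \<or> S = snd e" "S = fst e' \<or> S = snd e'" by blast
    then have "e = e'"
      using toggle_matching_edge_at[OF remove e(1)] toggle_matching_edge_at[OF remove e(2)]
      by presburger
    then show False using e(3) by contradiction
  qed
qed (use assms in blast)

lemma toggle_matching_complete:
  assumes "\<And>F. F \<in> P \<Longrightarrow> u F \<notin> F \<Longrightarrow> insert (u F) F \<in> P \<and> u (insert (u F) F) = u F"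
  shows "complete_matching P (toggle_matching u P)"
  unfolding complete_matching_def
proof
  fix F assume F: "F \<in> P"
  show "\<exists>e\<in>toggle_matching u P. F = fst e \<or> F = snd e"
  proof (cases "u F \<in> F")
    case True
    with F have "(F, F - {u F}) \<in> toggle_matching u P" unfolding toggle_matching_def by blast
    then show ?thesis by force
  next
    case False
    with F assms have "(insert (u F) F, F) \<in> toggle_matching u P"
      unfolding toggle_matching_def by force
    then show ?thesis by force
  qed
qed

lemma toggle_matching_acyclic:
  assumes "wf lt" and finite: "\<And>F. F \<in> P \<Longrightarrow> finite F"
    and remove: "\<And>F. F \<in> P \<Longrightarrow> u F \<in> F \<Longrightarrow> u (F - {u F}) = u F"
    and antimono: "\<And>A B. A \<in> P \<Longrightarrow> B \<in> P \<Longrightarrow> B \<subset> A \<Longrightarrow> u B = u A \<or> (u B, u A) \<in> lt"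
  shows "acyclic_matching (hasse_diagram P (\<subset>)) (toggle_matching u P)"
proof -
  define H where "H = hasse_diagram P (\<subset>)"
  define M where "M = toggle_matching u P"
  define rank where "rank S = (u S, S - {u S}, of_bool (u S \<notin> S) :: nat)" for S
  let ?less = "inv_image (lt <*lex*> finite_psubset <*lex*> less_than) rank"
  have "(H - M)\<inverse> \<union> M \<subseteq> ?less"
  proof
    fix x assume "x \<in> (H - M)\<inverse> \<union> M"
    then consider (hasse) B A where "x = (B, A)" "A \<in> P" "B \<in> P" "B \<subset> A" "(A, B) \<notin> M"
      | (matched) A where "x = (A, A - {u A})" "A \<in> P" "u A \<in> A"
      unfolding H_def M_def hasse_diagram_def toggle_matching_def by blast
    then show "x \<in> ?less"
    proof cases
      case hasse
      from hasse(2-4) consider "u B = u A" | "(u B, u A) \<in> lt" using antimono by blast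
      then show ?thesis
      proof cases
        case 1
        have "B \<noteq> A - {u A}"
          using hasse(2,4,5) 1 unfolding M_def toggle_matching_def by auto
        then have "B - {u A} \<subset> A - {u A}" using hasse(4) by blast
        then show ?thesis using hasse(1,2) 1 finite unfolding rank_def finite_psubset_def by auto
      qed (use hasse(1) in \<open>simp add: rank_def\<close>)
    next
      case matched
      then show ?thesis using remove unfolding rank_def by auto
    qed
  qed
  moreover have "wf ?less" using \<open>wf lt\<close> by auto
  ultimately have "acyclic ((H - M)\<inverse> \<union> M)" by (metis wf_acyclic acyclic_subset)
  then have "acyclic (((H - M)\<inverse> \<union> M)\<inverse>)" by (simp only: acyclic_converse)
  then show ?thesis unfolding acyclic_matching_def H_def M_def by (simp add: converse_Un)
qed

definition least_wrt :: "'a rel \<Rightarrow> 'a set \<Rightarrow> 'a" where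
  "least_wrt r A = (THE x. x \<in> A \<and> (\<forall>y\<in>A. (x, y) \<in> r))"

lemma least_wrt_eqI:
  assumes "antisym r" "x \<in> A" "\<forall>y\<in>A. (x, y) \<in> r"
  shows "least_wrt r A = x"
  unfolding least_wrt_def using assms by (blast intro: the_equality dest: antisymD)

lemma finite_linear_order_on: "linear_order_on V r \<Longrightarrow> finite V \<Longrightarrow> finite r"
  by (rule finite_subset[of _ "V \<times> V"]) (auto simp: order_on_defs refl_on_def)

lemma least_wrt:
  assumes lin: "linear_order_on V r" and "finite V" "A \<subseteq> V" "A \<noteq> {}"
  shows "least_wrt r A \<in> A" "\<forall>y\<in>A. (least_wrt r A, y) \<in> r"
proof -
  have "wf (r - Id)"
    using lin partial_order_on_well_order_on finite_linear_order_on[OF lin \<open>finite V\<close>]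
    unfolding linear_order_on_def by blast
  then obtain x where x: "x \<in> A" and min: "\<And>y. (y, x) \<in> r - Id \<Longrightarrow> y \<notin> A"
    using wfE_min'[OF _ \<open>A \<noteq> {}\<close>] by blast
  have "(x, y) \<in> r" if "y \<in> A" for y
  proof (cases "y = x")
    case True
    then show ?thesis using lin x \<open>A \<subseteq> V\<close> by (auto simp: order_on_defs refl_on_def)
  next
    case False
    then have "(y, x) \<notin> r" using min that by blast
    then show ?thesis
      using lin False x that \<open>A \<subseteq> V\<close> unfolding order_on_defs total_on_def by blast
  qed
  then have "least_wrt r A = x"
    using lin x by (intro least_wrt_eqI) (auto simp: order_on_defs)
  then show "least_wrt r A \<in> A" "\<forall>y\<in>A. (least_wrt r A, y) \<in> r"
    using x \<open>\<And>y. y \<in> A \<Longrightarrow> (x, y) \<in> r\<close> by auto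
qed

definition nondominators :: "'a set \<Rightarrow> 'a rel list \<Rightarrow> 'a set \<Rightarrow> 'a set" where
  "nondominators V S F = {v \<in> V. \<not> dominates_in_rep S v F}"

lemma dominates_in_order_antimono:
  "dominates_in_order r v G \<Longrightarrow> F \<subseteq> G \<Longrightarrow> dominates_in_order r v F"
  unfolding dominates_in_order_def by blast

lemma nondominators_mono: "F \<subseteq> G \<Longrightarrow> nondominators V S F \<subseteq> nondominators V S G"
  unfolding nondominators_def dominates_in_rep_def dominates_in_order_def by blast

lemma dominates_in_rep_append:
  "dominates_in_rep (S @ [r]) v F \<longleftrightarrow> dominates_in_rep S v F \<or> dominates_in_order r v F"
  unfolding dominates_in_rep_def by auto

lemma nondominator_Diff:
  assumes "representation V S" "u \<in> nondominators V S F"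
  shows "u \<in> nondominators V S (F - {u})"
proof -
  have "(u, u) \<in> q" if "q \<in> set S" for q
    using assms that unfolding representation_def nondominators_def order_on_defs refl_on_def
    by blast
  then show ?thesis
    using assms(2) unfolding nondominators_def dominates_in_rep_def dominates_in_order_def
    by blast
qed

text \<open>A non-dominator \<open>u\<close> of \<open>F\<close> lies strictly below some element of \<open>F\<close> in each order of
  \<open>S\<close>, so whoever dominates \<open>F\<close> there dominates \<open>u\<close> too.\<close>
lemma nondominators_insert:
  assumes rep: "representation V S" and "F \<subseteq> V" and u: "u \<in> nondominators V S F"
  shows "nondominators V S (insert u F) = nondominators V S F"
proof
  show "nondominators V S (insert u F) \<subseteq> nondominators V S F"
  proof
    fix y assume y: "y \<in> nondominators V S (insert u F)"
    show "y \<in> nondominators V S F"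
    proof (rule ccontr)
      assume "y \<notin> nondominators V S F"
      then obtain q where q: "q \<in> set S" "\<forall>f\<in>F. (f, y) \<in> q"
        using y unfolding nondominators_def dominates_in_rep_def dominates_in_order_def by auto
      have lin: "linear_order_on V q" using rep q(1) by (simp add: representation_def)
      have "\<not> dominates_in_order q u F"
        using u q(1) unfolding nondominators_def dominates_in_rep_def by blast
      then obtain f where f: "f \<in> F" "(f, u) \<notin> q"
        unfolding dominates_in_order_def by blast
      have "u \<in> V" using u by (simp add: nondominators_def)
      then have "f \<noteq> u" using lin f(2) by (auto simp: order_on_defs refl_on_def)
      then have "(u, f) \<in> q"
        using lin f \<open>u \<in> V\<close> \<open>F \<subseteq> V\<close> unfolding order_on_defs total_on_def by blast
      then have "(u, y) \<in> q" using lin q(2) f(1) by (meson order_on_defs transD)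
      then show False
        using y q unfolding nondominators_def dominates_in_rep_def dominates_in_order_def by auto
    qed
  qed
qed (simp add: nondominators_mono subset_insertI)

locale representation_extension =
  fixes V :: "'a set" and Q :: "'a rel list" and r :: "'a rel"
  assumes finite_V: "finite V" and rep: "representation V Q" and lin: "linear_order_on V r"
begin

definition new_sets :: "'a set set" where
  "new_sets = supremum_section V (Q @ [r]) - supremum_section V Q"

definition pivot :: "'a set \<Rightarrow> 'a" where
  "pivot F = least_wrt r (nondominators V Q F)"

lemma new_sets_iff:
  "F \<in> new_sets \<longleftrightarrow>
     F \<subseteq> V \<and> (\<forall>v\<in>nondominators V Q F. dominates_in_order r v F) \<and> nondominators V Q F \<noteq> {}"
  unfolding new_sets_def supremum_section_def nondominators_def dominates_in_rep_append by auto

lemma pivot: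
  assumes "F \<in> new_sets"
  shows "pivot F \<in> nondominators V Q F" "\<forall>y\<in>nondominators V Q F. (pivot F, y) \<in> r"
proof -
  have "nondominators V Q F \<subseteq> V" "nondominators V Q F \<noteq> {}"
    using assms unfolding new_sets_iff nondominators_def by auto
  from least_wrt[OF lin finite_V this]
  show "pivot F \<in> nondominators V Q F" "\<forall>y\<in>nondominators V Q F. (pivot F, y) \<in> r"
    unfolding pivot_def .
qed

lemma below_pivot: "F \<in> new_sets \<Longrightarrow> f \<in> F \<Longrightarrow> (f, pivot F) \<in> r"
  using pivot(1) new_sets_iff unfolding dominates_in_order_def by blast

lemma new_sets_remove_pivot:
  assumes F: "F \<in> new_sets"
  shows "F - {pivot F} \<in> new_sets \<and> pivot (F - {pivot F}) = pivot F"
proof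
  let ?p = "pivot F"
  have sub: "nondominators V Q (F - {?p}) \<subseteq> nondominators V Q F"
    by (simp add: nondominators_mono)
  have p: "?p \<in> nondominators V Q (F - {?p})"
    using nondominator_Diff[OF rep pivot(1)[OF F]] .
  show "F - {?p} \<in> new_sets"
    using F p sub unfolding new_sets_iff by (blast intro: dominates_in_order_antimono)
  show "pivot (F - {?p}) = ?p"
    unfolding pivot_def[of "F - {?p}"]
    using p sub pivot(2)[OF F] lin by (intro least_wrt_eqI) (auto simp: order_on_defs)
qed

lemma new_sets_insert_pivot:
  assumes F: "F \<in> new_sets"
  shows "insert (pivot F) F \<in> new_sets \<and> pivot (insert (pivot F) F) = pivot F"
proof -
  let ?p = "pivot F"
  have N: "nondominators V Q (insert ?p F) = nondominators V Q F"
    using nondominators_insert[OF rep _ pivot(1)[OF F]] F new_sets_iff by blast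
  have "dominates_in_order r v (insert ?p F)" if "v \<in> nondominators V Q F" for v
    using pivot(2)[OF F] below_pivot[OF F] lin that
    unfolding dominates_in_order_def order_on_defs by (metis insert_iff transD)
  then show ?thesis
    using F N pivot(1)[OF F] unfolding new_sets_iff pivot_def nondominators_def by auto
qed

lemma pivot_antimono:
  assumes "A \<in> new_sets" "B \<in> new_sets" "B \<subseteq> A"
  shows "(pivot A, pivot B) \<in> r"
  using pivot[OF assms(1)] pivot(1)[OF assms(2)] nondominators_mono[OF assms(3)] by blast

lemma wf_strictly_above: "wf (r\<inverse> - Id)"
proof -
  have "finite (r\<inverse>)" using finite_linear_order_on[OF lin finite_V] by simp
  then show ?thesis
    using lin partial_order_on_well_order_on partial_order_on_converse linear_order_on_def by blast
qed

lemma new_sets_complete_acyclic_matching: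
  defines "H \<equiv> hasse_diagram new_sets (\<subset>)" and "M \<equiv> toggle_matching pivot new_sets"
  shows "is_matching H M \<and> complete_matching new_sets M \<and> acyclic_matching H M"
proof (intro conjI)
  show "is_matching H M" unfolding H_def M_def
    by (rule toggle_matching_is_matching) (rule new_sets_remove_pivot)
  show "complete_matching new_sets M" unfolding M_def
  proof (rule toggle_matching_complete)
    fix F assume "F \<in> new_sets"
    then show "insert (pivot F) F \<in> new_sets \<and> pivot (insert (pivot F) F) = pivot F"
      by (rule new_sets_insert_pivot)
  qed
  have finite_new_sets: "finite F" if "F \<in> new_sets" for F
    using that finite_V unfolding new_sets_iff by (blast intro: finite_subset)
  show "acyclic_matching H M" unfolding H_def M_def
  proof (rule toggle_matching_acyclic[OF wf_strictly_above finite_new_sets])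
    fix F assume "F \<in> new_sets"
    then show "pivot (F - {pivot F}) = pivot F" using new_sets_remove_pivot by blast
  next
    fix A B assume "A \<in> new_sets" "B \<in> new_sets" "B \<subset> A"
    then show "pivot B = pivot A \<or> (pivot B, pivot A) \<in> r\<inverse> - Id"
      using pivot_antimono[of A B] by auto
  qed
qed

end

theorem lemma4:
  fixes V :: "'a set" and R :: "'a rel list"
  assumes "finite V"
    and "length R \<ge> 1"
    and "representation V R"
  shows "\<exists>M. let P = supremum_section V R - supremum_section V (butlast R);
                H = hasse_diagram P (\<subset>)
            in is_matching H M \<and> complete_matching P M \<and> acyclic_matching H M"
proof -
  obtain Q r where R: "R = Q @ [r]"
    using assms(2) by (cases R rule: rev_cases) auto
  interpret representation_extension V Q r
    using assms R by unfold_locales (auto simp: representation_def)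
  have "butlast R = Q" by (simp add: R)
  then show ?thesis
    using new_sets_complete_acyclic_matching unfolding Let_def new_sets_def R[symmetric] by blast
qed

end
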